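(* For all integers $n_1\ge n_2\ge n_3\ge 2$, $$m_0(1,n_1,n_2,n_3)=n_1+n_2+n_3-2.$$
   Context: For integers $n_1\ge\dots\ge n_r$, let $X_\ell=[n_\ell]$. An $r$-partite $r$-graph is a family $\mathcal F\subseteq X_1\times\dots\times X_r$; its vertices are the pairs $(\ell,x)$ with $x\in X_\ell$, and an edge $A=(a_1,\dots,a_r)$ contains the vertex $(\ell,x)$ iff $a_\ell=x$. Two edges $A,B$ are disjoint if $A[\ell]\ne B[\ell]$ for all $\ell$. The matching number $\nu(\mathcal F)$ is the maximum number of pairwise disjoint edges of $\mathcal F$. A transversal is a set $T$ of vertices such that every edge of $\mathcal F$ contains a vertex of $T$; $\tau(\mathcal F)$ is the minimum size of a transversal. For integers $r\ge 3$ and $n_1\ge\dots\ge n_r>s\ge 1$, $m_0(s,n_1,\dots,n_r)$ denotes the maximum of $|\mathcal F|$ over all $\mathcal F\subseteq X_1\times\dots\times X_r$ with $\nu(\mathcal F)\le s<\tau(\mathcal F)$. *)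

theory Defs
  imports Main
begin

text \<open>An r-partite r-graph with part sizes ns = [n_1,...,n_r] (list index l = part l+1).
  Edges are lists a of length r with a!l in X_l = {1..ns!l}.\<close>

definition edges :: "nat list \<Rightarrow> nat list set" where
  "edges ns = {a. length a = length ns \<and> (\<forall>l<length ns. a ! l \<in> {1..ns ! l})}"

definition vertices :: "nat list \<Rightarrow> (nat \<times> nat) set" where
  "vertices ns = {(l, x). l < length ns \<and> x \<in> {1..ns ! l}}"

definition contains_vertex :: "nat list \<Rightarrow> nat \<times> nat \<Rightarrow> bool" where
  "contains_vertex A v = (fst v < length A \<and> A ! fst v = snd v)"

definition edges_disjoint :: "nat list \<Rightarrow> nat list \<Rightarrow> bool" where
  "edges_disjoint A B = (\<forall>l<length A. A ! l \<noteq> B ! l)"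

definition is_matching :: "nat list set \<Rightarrow> nat list set \<Rightarrow> bool" where
  "is_matching F M = (M \<subseteq> F \<and> (\<forall>A\<in>M. \<forall>B\<in>M. A \<noteq> B \<longrightarrow> edges_disjoint A B))"

definition matching_number :: "nat list set \<Rightarrow> nat" where
  "matching_number F = Max {card M | M. is_matching F M}"

definition is_transversal :: "nat list \<Rightarrow> nat list set \<Rightarrow> (nat \<times> nat) set \<Rightarrow> bool" where
  "is_transversal ns F T = (T \<subseteq> vertices ns \<and> (\<forall>A\<in>F. \<exists>v\<in>T. contains_vertex A v))"

definition transversal_number :: "nat list \<Rightarrow> nat list set \<Rightarrow> nat" where
  "transversal_number ns F = Min {card T | T. is_transversal ns F T}"

definition m0 :: "nat \<Rightarrow> nat list \<Rightarrow> nat" where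
  "m0 s ns = Max {card F | F. F \<subseteq> edges ns \<and> matching_number F \<le> s
                              \<and> s < transversal_number ns F}"

end

theory Submission
  imports Defs
begin

text \<open>
  Upper bound: fix an edge A of an intersecting family F that no single vertex covers, and
  classify every other edge B by the coordinates in which it agrees with A: there is at least
  one (F is intersecting) and at most two. The edges differing from A only in coordinate l are
  determined by their l-th entry, so there are at most n_l - 1 of them. If some edge agrees
  with A only in coordinate i, then no edge differs from A only in i, and as the vertex (i, A_i)
  does not cover F, some edge agrees with A only in a coordinate j \<noteq> i. All edges agreeing
  with A only in i meet that edge in the third coordinate, hence are determined by their j-th
  entry. So the classes "agrees only in l" are nonempty for none, two or all three l, and each
  case gives |F| \<le> 1 + \<Sum>(n_l - 1).

  Lower bound: the n_1 + n_2 + n_3 - 2 edges containing at least two of the three vertices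
  (l, 1) pairwise intersect by pigeonhole, and no single vertex meets all of them.
\<close>

lemma finite_cards_of_subsets:
  assumes "finite A" and "\<And>X. P X \<Longrightarrow> X \<subseteq> A"
  shows "finite {card X | X. P X}"
proof (rule finite_subset)
  show "{card X | X. P X} \<subseteq> card ` Pow A"
    using assms(2) by auto
qed (use assms(1) in simp)

lemma finite_edges: "finite (edges ns)"
proof (rule finite_subset)
  have "x \<le> sum_list ns" if a: "a \<in> edges ns" and x: "x \<in> set a" for a x
  proof -
    obtain l where "l < length a" and "x = a ! l"
      using x by (auto simp: in_set_conv_nth)
    with a have "l < length ns" and "x \<le> ns ! l"
      by (auto simp: edges_def)
    then show ?thesis
      using elem_le_sum_list[of l ns] by simp
  qed
  then show "edges ns \<subseteq> {a. set a \<subseteq> {..sum_list ns} \<and> length a = length ns}"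
    by (auto simp: edges_def)
qed (rule finite_lists_length_eq, simp)

lemma finite_vertices: "finite (vertices ns)"
proof (rule finite_subset)
  show "vertices ns \<subseteq> (SIGMA l:{..<length ns}. {1..ns ! l})"
    by (auto simp: vertices_def)
qed simp

lemma matching_number_le_1_iff:
  assumes F: "F \<subseteq> edges ns"
  shows "matching_number F \<le> 1 \<longleftrightarrow> (\<forall>B\<in>F. \<forall>C\<in>F. B \<noteq> C \<longrightarrow> \<not> edges_disjoint B C)"
proof -
  have "finite F"
    using F finite_edges finite_subset by blast
  then have finite_cards: "finite {card M | M. is_matching F M}"
    by (rule finite_cards_of_subsets) (simp add: is_matching_def)
  show ?thesis
  proof
    assume "matching_number F \<le> 1"
    show "\<forall>B\<in>F. \<forall>C\<in>F. B \<noteq> C \<longrightarrow> \<not> edges_disjoint B C"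
    proof (intro ballI impI notI)
      fix B C assume B: "B \<in> F" and C: "C \<in> F" and "B \<noteq> C" and "edges_disjoint B C"
      moreover have "length B = length C"
        using subsetD[OF F B] subsetD[OF F C] by (simp add: edges_def)
      ultimately have "is_matching F {B, C}"
        by (auto simp: is_matching_def edges_disjoint_def)
      then have "card {B, C} \<le> matching_number F"
        unfolding matching_number_def using finite_cards by (intro Max_ge) blast+
      with \<open>B \<noteq> C\<close> \<open>matching_number F \<le> 1\<close> show False
        by simp
    qed
  next
    assume pairwise: "\<forall>B\<in>F. \<forall>C\<in>F. B \<noteq> C \<longrightarrow> \<not> edges_disjoint B C"
    have card_le: "card M \<le> 1" if "is_matching F M" for M
    proof -
      have "M \<subseteq> F" and "\<forall>B\<in>M. \<forall>C\<in>M. B = C"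
        using that pairwise unfolding is_matching_def by blast+
      moreover from this(1) have "finite M"
        using \<open>finite F\<close> by (rule finite_subset)
      ultimately show ?thesis
        by (simp add: card_le_Suc0_iff_eq)
    qed
    have "is_matching F {}"
      by (simp add: is_matching_def)
    then have "{card M | M. is_matching F M} \<noteq> {}"
      by blast
    then show "matching_number F \<le> 1"
      unfolding matching_number_def by (rule Max.boundedI[OF finite_cards]) (use card_le in blast)
  qed
qed

lemma transversal_number_gt_1_iff:
  assumes F: "F \<subseteq> edges ns" and "ns \<noteq> []"
  shows "1 < transversal_number ns F \<longleftrightarrow>
    F \<noteq> {} \<and> (\<forall>v\<in>vertices ns. \<exists>B\<in>F. \<not> contains_vertex B v)"
proof -
  have finite_cards: "finite {card T | T. is_transversal ns F T}"
    by (rule finite_cards_of_subsets[OF finite_vertices[of ns]]) (simp add: is_transversal_def)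
  have "is_transversal ns F (vertices ns)"
  proof -
    have "(0, B ! 0) \<in> vertices ns \<and> contains_vertex B (0, B ! 0)" if "B \<in> F" for B
      using that F \<open>ns \<noteq> []\<close> by (auto simp: edges_def vertices_def contains_vertex_def)
    then show ?thesis
      unfolding is_transversal_def by blast
  qed
  then have "1 < transversal_number ns F \<longleftrightarrow> (\<forall>T. is_transversal ns F T \<longrightarrow> 1 < card T)"
    unfolding transversal_number_def using finite_cards by (subst Min_gr_iff) auto
  also have "\<dots> \<longleftrightarrow> \<not> is_transversal ns F {} \<and> (\<forall>v. \<not> is_transversal ns F {v})"
  proof -
    have "T = {} \<or> (\<exists>v. T = {v})" if "is_transversal ns F T" and "\<not> 1 < card T" for T
    proof -
      have "finite T"
        using that(1) finite_subset[OF _ finite_vertices[of ns]] by (simp add: is_transversal_def)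
      show ?thesis
      proof (cases "T = {}")
        case False
        then obtain v where "v \<in> T"
          by blast
        moreover have "card T \<le> 1"
          using that(2) by simp
        ultimately have "T = {v}"
          using \<open>finite T\<close> by (auto simp: card_le_Suc0_iff_eq)
        then show ?thesis
          by blast
      qed simp
    qed
    then show ?thesis
      by fastforce
  qed
  also have "\<dots> \<longleftrightarrow> F \<noteq> {} \<and> (\<forall>v\<in>vertices ns. \<exists>B\<in>F. \<not> contains_vertex B v)"
    by (auto simp: is_transversal_def)
  finally show ?thesis .
qed

lemma sum_less_3:
  fixes i j k :: nat
  assumes "i < 3" "j < 3" "k < 3" "i \<noteq> j" "i \<noteq> k" "j \<noteq> k"
  shows "(\<Sum>l<3. f l) = f i + f j + f k"
proof -
  have "{..<3} = {i, j, k}"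
    using assms by auto
  with assms show ?thesis
    by (simp add: add.assoc)
qed

locale intersecting_tripartite =
  fixes ns :: "nat list" and F :: "nat list set" and A :: "nat list"
  assumes length_ns: "length ns = 3"
    and family_edges: "F \<subseteq> edges ns"
    and intersecting: "\<And>B C. B \<in> F \<Longrightarrow> C \<in> F \<Longrightarrow> B \<noteq> C \<Longrightarrow> \<not> edges_disjoint B C"
    and uncovered: "\<And>v. v \<in> vertices ns \<Longrightarrow> \<exists>B\<in>F. \<not> contains_vertex B v"
    and A_mem: "A \<in> F"
begin

lemma length_edge: "B \<in> F \<Longrightarrow> length B = 3"
  using family_edges length_ns by (auto simp: edges_def)

lemma edge_coord: "B \<in> F \<Longrightarrow> l < 3 \<Longrightarrow> B ! l \<in> {1..ns ! l}"
  using family_edges length_ns by (auto simp: edges_def)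

lemma edge_eqI: "B \<in> F \<Longrightarrow> C \<in> F \<Longrightarrow> (\<And>m. m < 3 \<Longrightarrow> B ! m = C ! m) \<Longrightarrow> B = C"
  by (rule nth_equalityI) (simp_all add: length_edge)

lemma edges_meet: "B \<in> F \<Longrightarrow> C \<in> F \<Longrightarrow> B \<noteq> C \<Longrightarrow> \<exists>m<3. B ! m = C ! m"
  using intersecting length_edge unfolding edges_disjoint_def by fastforce

lemma finite_family: "finite F"
  using family_edges finite_edges by (rule finite_subset)

lemma uncovered_coord:
  assumes "l < 3"
  shows "\<exists>B\<in>F. B ! l \<noteq> x"
proof (cases "(l, x) \<in> vertices ns")
  case True
  then obtain B where "B \<in> F" and "\<not> contains_vertex B (l, x)"
    using uncovered by blast
  then show ?thesis
    using assms length_edge by (auto simp: contains_vertex_def)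
next
  case False
  then have "A ! l \<noteq> x"
    using edge_coord[OF A_mem assms] assms length_ns by (auto simp: vertices_def)
  then show ?thesis
    using A_mem by blast
qed

lemma two_le_part_size:
  assumes "l < 3"
  shows "2 \<le> ns ! l"
proof -
  obtain B where "B \<in> F" and "B ! l \<noteq> A ! l"
    using uncovered_coord[OF assms] by blast
  moreover have "B ! l \<in> {1..ns ! l}" and "A ! l \<in> {1..ns ! l}"
    using edge_coord[OF _ assms] A_mem \<open>B \<in> F\<close> by blast+
  ultimately show ?thesis
    by (cases "B ! l < A ! l") auto
qed

definition differs_only :: "nat \<Rightarrow> nat list set" where
  "differs_only l = {B \<in> F. \<forall>m<3. B ! m \<noteq> A ! m \<longleftrightarrow> m = l}"

definition agrees_only :: "nat \<Rightarrow> nat list set" where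
  "agrees_only l = {B \<in> F. \<forall>m<3. B ! m = A ! m \<longleftrightarrow> m = l}"

lemma differs_only_coord: "B \<in> differs_only l \<Longrightarrow> m < 3 \<Longrightarrow> B ! m \<noteq> A ! m \<longleftrightarrow> m = l"
  by (simp add: differs_only_def)

lemma agrees_only_coord: "B \<in> agrees_only l \<Longrightarrow> m < 3 \<Longrightarrow> B ! m = A ! m \<longleftrightarrow> m = l"
  by (simp add: agrees_only_def)

lemma differs_only_subset: "differs_only l \<subseteq> F"
  by (auto simp: differs_only_def)

lemma agrees_only_subset: "agrees_only l \<subseteq> F"
  by (auto simp: agrees_only_def)

lemma family_cover: "F \<subseteq> insert A (\<Union>l<3. differs_only l \<union> agrees_only l)"
proof
  fix B assume B: "B \<in> F"
  show "B \<in> insert A (\<Union>l<3. differs_only l \<union> agrees_only l)"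
  proof (cases "B = A")
    case False
    then have "\<not> (\<forall>m<3. B ! m = A ! m)" and "\<exists>m<3. B ! m = A ! m"
      using edge_eqI[OF B A_mem] edges_meet[OF B A_mem] by blast+
    then show ?thesis
      using B unfolding differs_only_def agrees_only_def
      by (auto simp: less_Suc_eq numeral_eq_Suc)
  qed simp
qed

lemma card_le_if_inj_on_coord:
  assumes "l < 3" and "S \<subseteq> F" and "inj_on (\<lambda>B. B ! l) S" and "\<And>B. B \<in> S \<Longrightarrow> B ! l \<noteq> A ! l"
  shows "card S \<le> ns ! l - 1"
proof -
  have "(\<lambda>B. B ! l) ` S \<subseteq> {1..ns ! l} - {A ! l}"
    using assms edge_coord by auto
  with assms(3) have "card S \<le> card ({1..ns ! l} - {A ! l})"
    by (intro card_inj_on_le) auto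
  also have "\<dots> = ns ! l - 1"
    using edge_coord[OF A_mem assms(1)] by simp
  finally show ?thesis .
qed

lemma card_differs_only:
  assumes "l < 3"
  shows "card (differs_only l) \<le> ns ! l - 1"
proof (rule card_le_if_inj_on_coord[OF assms])
  show "inj_on (\<lambda>B. B ! l) (differs_only l)"
  proof (rule inj_onI)
    fix B C assume "B \<in> differs_only l" "C \<in> differs_only l" "B ! l = C ! l"
    then show "B = C"
      by (intro edge_eqI) (auto simp: differs_only_def)
  qed
qed (use assms in \<open>auto simp: differs_only_def\<close>)

lemma differs_only_empty:
  assumes "l < 3" and "agrees_only l \<noteq> {}"
  shows "differs_only l = {}"
proof (rule ccontr)
  assume "differs_only l \<noteq> {}"
  then obtain B C where B: "B \<in> agrees_only l" and C: "C \<in> differs_only l"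
    using assms(2) by blast
  then have "B \<noteq> C"
    using agrees_only_coord[OF B assms(1)] differs_only_coord[OF C assms(1)] by auto
  then obtain m where m: "m < 3" "B ! m = C ! m"
    using edges_meet B C agrees_only_subset differs_only_subset by blast
  with agrees_only_coord[OF B m(1)] differs_only_coord[OF C m(1)] show False
    by auto
qed

lemma agrees_only_third_coord:
  assumes B: "B \<in> agrees_only i" and C: "C \<in> agrees_only j"
    and "i < 3" "j < 3" "k < 3" "i \<noteq> j" "k \<noteq> i" "k \<noteq> j"
  shows "B ! k = C ! k"
proof -
  have "B \<noteq> C"
    using agrees_only_coord[OF B \<open>i < 3\<close>] agrees_only_coord[OF C \<open>i < 3\<close>] \<open>i \<noteq> j\<close> by auto
  then obtain m where "m < 3" and "B ! m = C ! m"
    using edges_meet B C agrees_only_subset by blast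
  moreover have "B ! m = A ! m \<longleftrightarrow> m = i" and "C ! m = A ! m \<longleftrightarrow> m = j"
    using agrees_only_coord[OF B \<open>m < 3\<close>] agrees_only_coord[OF C \<open>m < 3\<close>] .
  ultimately have "m = k"
    using assms(3-) by auto
  with \<open>B ! m = C ! m\<close> show ?thesis
    by simp
qed

lemma inj_on_agrees_only:
  assumes "i < 3" "j < 3" "i \<noteq> j" and "agrees_only j \<noteq> {}"
  shows "inj_on (\<lambda>B. B ! j) (agrees_only i)"
proof (rule inj_onI)
  obtain C where C: "C \<in> agrees_only j"
    using assms(4) by blast
  have "\<exists>k<3. k \<noteq> i \<and> k \<noteq> j"
    by presburger
  then obtain k where k: "k < 3" "k \<noteq> i" "k \<noteq> j"
    by blast
  fix B B' assume B: "B \<in> agrees_only i" and B': "B' \<in> agrees_only i" and "B ! j = B' ! j"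
  show "B = B'"
  proof (rule edge_eqI)
    fix m :: nat assume "m < 3"
    then consider "m = i" | "m = j" | "m = k"
      using assms k by arith
    then show "B ! m = B' ! m"
    proof cases
      case 1
      with agrees_only_coord[OF B assms(1)] agrees_only_coord[OF B' assms(1)] show ?thesis
        by simp
    next
      case 2
      with \<open>B ! j = B' ! j\<close> show ?thesis
        by simp
    next
      case 3
      with agrees_only_third_coord[OF B C] agrees_only_third_coord[OF B' C] assms(1-3) k
      show ?thesis
        by simp
    qed
  qed (use B B' agrees_only_subset in blast)+
qed

lemma card_agrees_only:
  assumes "i < 3" "j < 3" "i \<noteq> j" and "agrees_only j \<noteq> {}"
  shows "card (agrees_only i) \<le> ns ! j - 1"
  using assms inj_on_agrees_only agrees_only_subset
  by (intro card_le_if_inj_on_coord) (auto simp: agrees_only_def)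

lemma card_agrees_only_le_1:
  assumes "i < 3" and nonempty: "\<And>j. j < 3 \<Longrightarrow> agrees_only j \<noteq> {}"
  shows "card (agrees_only i) \<le> 1"
proof -
  have "\<exists>j<3. \<exists>k<3. i \<noteq> j \<and> i \<noteq> k \<and> j \<noteq> k"
    by presburger
  then obtain j k where jk: "j < 3" "k < 3" "i \<noteq> j" "i \<noteq> k" "j \<noteq> k"
    by blast
  obtain D where D: "D \<in> agrees_only k"
    using nonempty[OF \<open>k < 3\<close>] by blast
  have "B = B'" if B: "B \<in> agrees_only i" and B': "B' \<in> agrees_only i" for B B'
  proof (rule inj_onD[OF inj_on_agrees_only[OF assms(1) jk(1,3) nonempty[OF jk(1)]] _ B B'])
    show "B ! j = B' ! j"
      using agrees_only_third_coord[OF B D] agrees_only_third_coord[OF B' D] assms(1) jk by simp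
  qed
  then show ?thesis
    using finite_subset[OF agrees_only_subset finite_family] by (simp add: card_le_Suc0_iff_eq)
qed

lemma agrees_only_not_alone:
  assumes "i < 3" and "agrees_only i \<noteq> {}"
  shows "\<exists>j<3. j \<noteq> i \<and> agrees_only j \<noteq> {}"
proof -
  obtain B where B: "B \<in> F" "B ! i \<noteq> A ! i"
    using uncovered_coord[OF assms(1)] by blast
  then have "B \<noteq> A"
    by blast
  with B family_cover obtain l where "l < 3" and "B \<in> differs_only l \<or> B \<in> agrees_only l"
    by blast
  moreover have "B \<notin> differs_only i"
    using differs_only_empty[OF assms] by blast
  ultimately have "B \<in> agrees_only l" and "l \<noteq> i"
    using differs_only_coord[of B _ i] agrees_only_coord[of B l i] assms(1) B(2) by auto
  with \<open>l < 3\<close> show ?thesis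
    by blast
qed

lemma sum_card_parts_le:
  "(\<Sum>l<3. card (differs_only l) + card (agrees_only l)) \<le> (\<Sum>l<3. ns ! l - 1)"
proof -
  consider "\<forall>l<3. agrees_only l = {}" | "\<forall>l<3. agrees_only l \<noteq> {}"
    | k i where "k < 3" "agrees_only k = {}" "i < 3" "agrees_only i \<noteq> {}"
    by blast
  then show ?thesis
  proof cases
    case 1
    then show ?thesis
      using card_differs_only by (intro sum_mono) simp
  next
    case 2
    then show ?thesis
      using differs_only_empty card_agrees_only_le_1 two_le_part_size by (intro sum_mono) fastforce
  next
    case 3
    then obtain j where j: "j < 3" "j \<noteq> i" "agrees_only j \<noteq> {}"
      using agrees_only_not_alone by blast
    with 3 have "k \<noteq> i" "k \<noteq> j"
      by auto
    with 3 j have "card (differs_only i) + card (agrees_only i) \<le> ns ! j - 1"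
      and "card (differs_only j) + card (agrees_only j) \<le> ns ! i - 1"
      and "card (differs_only k) + card (agrees_only k) \<le> ns ! k - 1"
      using differs_only_empty card_agrees_only card_differs_only by simp_all
    with 3 j \<open>k \<noteq> i\<close> \<open>k \<noteq> j\<close> show ?thesis
      by (simp add: sum_less_3[of i j k])
  qed
qed

lemma card_family_le: "card F + 2 \<le> sum_list ns"
proof -
  have "card F \<le> card (insert A (\<Union>l<3. differs_only l \<union> agrees_only l))"
    using family_cover finite_subset[OF differs_only_subset finite_family]
      finite_subset[OF agrees_only_subset finite_family]
    by (intro card_mono) auto
  also have "\<dots> \<le> Suc (card (\<Union>l<3. differs_only l \<union> agrees_only l))"
    by (rule card_insert_le_m1) simp_all
  also have "\<dots> \<le> Suc (\<Sum>l<3. card (differs_only l \<union> agrees_only l))"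
    by (simp add: card_UN_le)
  also have "\<dots> \<le> Suc (\<Sum>l<3. card (differs_only l) + card (agrees_only l))"
    by (intro Suc_le_mono[THEN iffD2] sum_mono card_Un_le)
  also have "\<dots> \<le> Suc (\<Sum>l<3. ns ! l - 1)"
    using sum_card_parts_le by simp
  finally have "card F \<le> Suc (\<Sum>l<3. ns ! l - 1)" .
  moreover have "sum_list ns = (\<Sum>l<3. ns ! l)"
    using length_ns by (simp add: sum_list_sum_nth atLeast0LessThan)
  ultimately show ?thesis
    using two_le_part_size[of 0] two_le_part_size[of 1] two_le_part_size[of 2]
    by (simp add: sum_less_3[of 0 1 2])
qed

end

lemma m0_eqI:
  assumes upper: "\<And>F. F \<subseteq> edges ns \<Longrightarrow> matching_number F \<le> s \<Longrightarrow> s < transversal_number ns F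
      \<Longrightarrow> card F \<le> m"
    and "F \<subseteq> edges ns" and "matching_number F \<le> s" and "s < transversal_number ns F"
    and "card F = m"
  shows "m0 s ns = m"
  unfolding m0_def
proof (rule Max_eqI)
  show "finite {card F | F. F \<subseteq> edges ns \<and> matching_number F \<le> s \<and> s < transversal_number ns F}"
    by (rule finite_cards_of_subsets[OF finite_edges[of ns]]) simp
qed (use assms in blast)+

lemma card_le_if_matching_number_le_1:
  assumes "length ns = 3" and F: "F \<subseteq> edges ns"
    and "matching_number F \<le> 1" and "1 < transversal_number ns F"
  shows "card F + 2 \<le> sum_list ns"
proof -
  have "ns \<noteq> []"
    using assms(1) by auto
  then have "F \<noteq> {}" and uncovered: "\<forall>v\<in>vertices ns. \<exists>B\<in>F. \<not> contains_vertex B v"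
    using assms(4) transversal_number_gt_1_iff[OF F] by blast+
  then obtain A where "A \<in> F"
    by blast
  moreover have "\<forall>B\<in>F. \<forall>C\<in>F. B \<noteq> C \<longrightarrow> \<not> edges_disjoint B C"
    using assms(3) matching_number_le_1_iff[OF F] by blast
  ultimately interpret intersecting_tripartite ns F A
    using assms(1) F uncovered by unfold_locales blast+
  show ?thesis
    by (rule card_family_le)
qed

definition triangle_family :: "nat \<Rightarrow> nat \<Rightarrow> nat \<Rightarrow> nat list set" where
  "triangle_family n1 n2 n3 = insert [1, 1, 1]
     ((\<lambda>x. [x, 1, 1]) ` {2..n1} \<union> (\<lambda>x. [1, x, 1]) ` {2..n2} \<union> (\<lambda>x. [1, 1, x]) ` {2..n3})"

lemma triangle_family_edges:
  "1 \<le> n1 \<Longrightarrow> 1 \<le> n2 \<Longrightarrow> 1 \<le> n3 \<Longrightarrow> triangle_family n1 n2 n3 \<subseteq> edges [n1, n2, n3]"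
  by (auto simp: triangle_family_def edges_def less_Suc_eq)

lemma card_triangle_family:
  assumes "1 \<le> n1" "1 \<le> n2" "1 \<le> n3"
  shows "card (triangle_family n1 n2 n3) = n1 + n2 + n3 - 2"
proof -
  have "card ((\<lambda>x. [x, 1, 1]) ` {2..n1} \<union> (\<lambda>x. [1, x, 1]) ` {2..n2} \<union> (\<lambda>x. [1::nat, 1, x]) ` {2..n3})
      = (n1 - 1) + (n2 - 1) + (n3 - 1)"
    by (subst card_Un_disjoint card_image, auto simp: inj_on_def)+
  with assms show ?thesis
    unfolding triangle_family_def by (subst card_insert_disjoint) auto
qed

lemma triangle_family_intersecting:
  "B \<in> triangle_family n1 n2 n3 \<Longrightarrow> C \<in> triangle_family n1 n2 n3 \<Longrightarrow> \<not> edges_disjoint B C"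
  by (auto simp: triangle_family_def edges_disjoint_def less_Suc_eq)

lemma triangle_family_uncovered:
  assumes "2 \<le> n1" "2 \<le> n2" "2 \<le> n3" and "(l, x) \<in> vertices [n1, n2, n3]"
  shows "\<exists>B\<in>triangle_family n1 n2 n3. \<not> contains_vertex B (l, x)"
proof (cases "x = 1")
  case True
  have "l < 3"
    using assms(4) by (simp add: vertices_def)
  then show ?thesis
    using True assms(1-3)
    by (intro bexI[where x = "[1, 1, 1][l := 2]"])
       (auto simp: triangle_family_def contains_vertex_def less_Suc_eq numeral_eq_Suc)
next
  case False
  then show ?thesis
    by (auto simp: triangle_family_def contains_vertex_def nth_Cons')
qed

theorem theorem1p3:
  fixes n1 n2 n3 :: nat
  assumes "n1 \<ge> n2" and "n2 \<ge> n3" and "n3 \<ge> 2"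
  shows "m0 1 [n1, n2, n3] = n1 + n2 + n3 - 2"
proof -
  \<comment> \<open>The ordering of the parts is irrelevant; it only propagates the bound \<open>2 \<le> n3\<close>.\<close>
  have sizes: "2 \<le> n1" "2 \<le> n2" "2 \<le> n3"
    using assms by linarith+
  then have edges: "triangle_family n1 n2 n3 \<subseteq> edges [n1, n2, n3]"
    by (intro triangle_family_edges) simp_all
  show ?thesis
  proof (rule m0_eqI)
    fix F assume "F \<subseteq> edges [n1, n2, n3]" "matching_number F \<le> 1"
      "1 < transversal_number [n1, n2, n3] F"
    then show "card F \<le> n1 + n2 + n3 - 2"
      using card_le_if_matching_number_le_1[of "[n1, n2, n3]" F] by simp
  next
    show "matching_number (triangle_family n1 n2 n3) \<le> 1"
      using matching_number_le_1_iff[OF edges] triangle_family_intersecting by blast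
  next
    show "1 < transversal_number [n1, n2, n3] (triangle_family n1 n2 n3)"
      using transversal_number_gt_1_iff[OF edges] triangle_family_uncovered[OF sizes]
      by (auto simp: triangle_family_def)
  next
    show "card (triangle_family n1 n2 n3) = n1 + n2 + n3 - 2"
      using sizes by (intro card_triangle_family) simp_all
  qed (rule edges)
qed

end
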